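(* Let $q$ be a power of the prime $p$, $n\ge 2$ and $1\le i\le n$. Suppose that $p$ does not divide both of $\binom{n}{i}$ and $\binom{n-1}{i-1}$ (i.e. $p\nmid\binom{n}{i}$ or $p\nmid\binom{n-1}{i-1}$). Then $s_{n,i}(t)$ has no nonzero root (in an algebraic closure of $\mathbb{F}_q$) of multiplicity $m>1$ with $\gcd(m,p)=\gcd(m-1,p)=1$.
   Context: For a prime power $q$ and integers $n\ge 1$, $0\le i\le n$, the $i$-th $(n,q)$-elementary symmetric polynomial is $s_{n,i}(t)=\sum_{0\le j_1<j_2<\dots<j_i\le n-1} t^{q^{j_1}+q^{j_2}+\dots+q^{j_i}}\in\mathbb{F}_p[t]$ (where $p$ is the characteristic of $\mathbb{F}_q$). By convention $s_{n,0}(t)=1$. *)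

theory Defs
  imports "HOL-Computational_Algebra.Computational_Algebra"
begin

text \<open>The (n,q)-elementary symmetric polynomial s_{n,i}(t), with coefficients
  in an arbitrary commutative ring (for a field of characteristic p this is the
  image of the polynomial over F_p):
  sum over all i-element subsets J of {0..<n} of t^(sum_{j in J} q^j).\<close>
definition qsym :: "nat \<Rightarrow> nat \<Rightarrow> nat \<Rightarrow> 'a::comm_ring_1 poly" where
  "qsym q n i = (\<Sum>J\<in>{J. J \<subseteq> {0..<n} \<and> card J = i}. monom 1 (\<Sum>j\<in>J. q ^ j))"

end

theory Submission
  imports Defs
begin

text \<open>Every exponent \<open>e = \<Sum>j\<in>J. q ^ j\<close> of \<open>s\<^sub>n\<^sub>,\<^sub>i\<close> is congruent to 0 or 1 modulo \<open>q\<close>, so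
  \<open>e (e - 1)\<close> vanishes in characteristic \<open>p\<close> and the second derivative of \<open>s\<^sub>n\<^sub>,\<^sub>i\<close> is zero.
  On the other hand, as long as \<open>p\<close> does not divide the multiplicity of a root, differentiation
  lowers that multiplicity by exactly one and keeps the polynomial nonzero. If \<open>p\<close> divided
  neither \<open>m\<close> nor \<open>m - 1\<close>, applying this twice would make the second derivative nonzero.\<close>

lemma sum_power_less_power:
  fixes q :: nat
  assumes "q \<ge> 2" and "J \<subseteq> {..<n}"
  shows "(\<Sum>j\<in>J. q ^ j) < q ^ n"
  using assms(2)
proof (induction n arbitrary: J)
  case 0
  then show ?case by simp
next
  case (Suc n)
  have "finite J"
    using Suc.prems finite_subset by blast
  then have "(\<Sum>j\<in>J. q ^ j) \<le> q ^ n + (\<Sum>j\<in>J - {n}. q ^ j)"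
    by (cases "n \<in> J") (simp_all add: sum.remove)
  also have "\<dots> < q ^ n + q ^ n"
    using Suc.prems by (intro add_strict_left_mono Suc.IH) auto
  also have "\<dots> \<le> q ^ Suc n"
    using mult_le_mono1[OF assms(1), of "q ^ n"] by (simp add: mult_2)
  finally show ?case .
qed

lemma inj_on_sum_power:
  fixes q :: nat
  assumes "q \<ge> 2"
  shows "inj_on (\<lambda>J. \<Sum>j\<in>J. q ^ j) (Pow {..<n})"
proof (induction n)
  case 0
  then show ?case by simp
next
  case (Suc n)
  have split: "(\<Sum>j\<in>J. q ^ j) = (if n \<in> J then q ^ n else 0) + (\<Sum>j\<in>J - {n}. q ^ j)"
    if "J \<subseteq> {..<Suc n}" for J
    using finite_subset[OF that] by (simp add: sum.remove)
  show ?case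
  proof (rule inj_onI)
    fix J J' assume J: "J \<in> Pow {..<Suc n}" and J': "J' \<in> Pow {..<Suc n}"
      and eq: "(\<Sum>j\<in>J. q ^ j) = (\<Sum>j\<in>J'. q ^ j)"
    have top_digit: "n \<in> K \<longleftrightarrow> q ^ n \<le> (\<Sum>j\<in>K. q ^ j)" if "K \<in> Pow {..<Suc n}" for K
    proof -
      have "(\<Sum>j\<in>K - {n}. q ^ j) < q ^ n"
        using that by (intro sum_power_less_power[OF assms]) auto
      then show ?thesis
        unfolding split[OF PowD[OF that]] by auto
    qed
    have top: "n \<in> J \<longleftrightarrow> n \<in> J'"
      using top_digit[OF J] top_digit[OF J'] eq by simp
    have low: "J - {n} \<in> Pow {..<n}" "J' - {n} \<in> Pow {..<n}"
      using J J' by auto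
    have "(\<Sum>j\<in>J - {n}. q ^ j) = (\<Sum>j\<in>J' - {n}. q ^ j)"
      using eq top split[OF PowD[OF J]] split[OF PowD[OF J']] by simp
    then have "J - {n} = J' - {n}"
      by (rule inj_onD[OF Suc.IH _ low])
    with top show "J = J'"
      by blast
  qed
qed

text \<open>Needed because \<^term>\<open>order a 0\<close> is an unspecified junk value.\<close>

lemma qsym_nonzero:
  assumes "q \<ge> 2" and "i \<le> n"
  shows "(qsym q n i :: 'a::comm_ring_1 poly) \<noteq> 0"
proof -
  define S where "S = {J. J \<subseteq> {0..<n} \<and> card J = i}"
  define g where "g J = (\<Sum>j\<in>J. q ^ j)" for J
  have "S \<subseteq> Pow {..<n}"
    by (auto simp: S_def)
  then have inj: "inj_on g S"
    unfolding g_def using inj_on_sum_power[OF assms(1)] by (rule inj_on_subset[rotated])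
  have fin: "finite (g ` S)"
    unfolding S_def by simp
  have "{0..<i} \<in> S"
    using assms(2) by (auto simp: S_def)
  then have mem: "g {0..<i} \<in> g ` S"
    by blast
  have "qsym q n i = (\<Sum>e\<in>g ` S. monom (1::'a) e)"
    unfolding qsym_def S_def[symmetric] g_def[symmetric] using inj by (simp add: sum.reindex)
  then have "coeff (qsym q n i :: 'a poly) (g {0..<i}) = 1"
    using fin mem by (simp add: coeff_sum coeff_monom)
  then show ?thesis
    by auto
qed

lemma dvd_sum_power_times_pred:
  fixes q :: nat
  assumes "finite J"
  shows "q dvd (\<Sum>j\<in>J. q ^ j) * ((\<Sum>j\<in>J. q ^ j) - 1)"
proof -
  have q_dvd: "q dvd (\<Sum>j\<in>J - {0}. q ^ j)"
    by (intro dvd_sum) (simp add: dvd_power)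
  show ?thesis
  proof (cases "0 \<in> J")
    case True
    then have "(\<Sum>j\<in>J. q ^ j) - 1 = (\<Sum>j\<in>J - {0}. q ^ j)"
      using assms by (simp add: sum.remove)
    with q_dvd show ?thesis
      by simp
  next
    case False
    then have "(\<Sum>j\<in>J. q ^ j) = (\<Sum>j\<in>J - {0}. q ^ j)"
      by simp
    with q_dvd show ?thesis
      by simp
  qed
qed

lemma pderiv_pderiv_monom:
  "pderiv (pderiv (monom c e)) = monom (of_nat (e * (e - 1)) * c) (e - 2)"
  by (simp add: pderiv_monom mult_ac numeral_2_eq_2)

lemma pderiv_pderiv_qsym:
  assumes "CHAR('a) dvd q"
  shows "pderiv (pderiv (qsym q n i :: 'a::idom poly)) = 0"
proof -
  have monom_vanishes: "pderiv (pderiv (monom (1::'a) (\<Sum>j\<in>J. q ^ j))) = 0"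
    if "J \<subseteq> {0..<n}" for J
  proof -
    have "CHAR('a) dvd (\<Sum>j\<in>J. q ^ j) * ((\<Sum>j\<in>J. q ^ j) - 1)"
      using assms dvd_sum_power_times_pred[OF finite_subset[OF that finite_atLeastLessThan]]
      by (rule dvd_trans)
    then show ?thesis
      by (simp add: pderiv_pderiv_monom of_nat_eq_0_iff_char_dvd del: of_nat_mult)
  qed
  have "pderiv (pderiv (qsym q n i :: 'a poly)) =
      (\<Sum>J | J \<subseteq> {0..<n} \<and> card J = i. pderiv (pderiv (monom 1 (\<Sum>j\<in>J. q ^ j))))"
    using higher_pderiv_sum[of 2] by (simp add: qsym_def numeral_2_eq_2)
  also have "\<dots> = 0"
    using monom_vanishes by (intro sum.neutral) blast
  finally show ?thesis .
qed

lemma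
  fixes f :: "'a::field poly"
  assumes "f \<noteq> 0" and "\<not> CHAR('a) dvd order a f"
  shows pderiv_nonzero_if_not_char_dvd_order: "pderiv f \<noteq> 0"
    and order_pderiv_if_not_char_dvd_order: "order a (pderiv f) = order a f - 1"
proof -
  define x where "x = [:-a, 1:]"
  define m where "m = order a f"
  obtain u where f: "f = x ^ m * u" and x_u: "\<not> x dvd u"
    using order_decomp[OF assms(1)] unfolding x_def m_def by blast
  have "m \<noteq> 0"
    using assms(2) dvd_0_right unfolding m_def by metis
  then have x_m: "x ^ m = x ^ (m - 1) * x"
    by (metis power_minus_mult zero_less_iff_neq_zero)
  define w where "w = smult (of_nat m) u + x * pderiv u"
  have "pderiv (x ^ m) = smult (of_nat m) (x ^ (m - 1))"
    by (simp add: x_def pderiv_power pderiv_pCons)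
  then have "pderiv f = x ^ m * pderiv u + u * smult (of_nat m) (x ^ (m - 1))"
    unfolding f pderiv_mult by simp
  also have "\<dots> = x ^ (m - 1) * w"
    unfolding x_m w_def by (simp add: algebra_simps)
  finally have pderiv_f: "pderiv f = x ^ (m - 1) * w" .
  have x_w: "\<not> x dvd w"
  proof
    assume "x dvd w"
    then have "x dvd smult (of_nat m) u"
      unfolding w_def by (metis dvd_add_left_iff dvd_triv_left)
    moreover have "of_nat m \<noteq> (0::'a)"
      using assms(2) unfolding m_def by (simp add: of_nat_eq_0_iff_char_dvd)
    ultimately show False
      using x_u by (simp add: dvd_smult_cancel)
  qed
  then show "pderiv f \<noteq> 0"
    unfolding pderiv_f x_def by auto
  have "\<not> x ^ (m - 1) * x dvd x ^ (m - 1) * w"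
    using x_w by (metis dvd_mult_cancel_left power_eq_0_iff pCons_eq_0_iff x_def one_neq_zero)
  then have "\<not> x ^ Suc (m - 1) dvd pderiv f"
    by (simp only: pderiv_f power_Suc2 not_False_eq_True)
  then show "order a (pderiv f) = order a f - 1"
    unfolding m_def[symmetric] using pderiv_f by (intro order_unique_lemma) (simp_all add: x_def)
qed

text \<open>Only \<open>i \<le> n\<close> (for \<open>s\<^sub>n\<^sub>,\<^sub>i \<noteq> 0\<close>) is used among the hypotheses on \<open>n\<close> and \<open>i\<close>; the
  conditions on the binomial coefficients, \<open>a \<noteq> 0\<close> and \<open>m > 1\<close> are not needed.\<close>

theorem corollary3p11:
  fixes p q n i k :: nat
  assumes "prime p" and "k \<ge> 1" and "q = p ^ k"
    and "n \<ge> 2" and "1 \<le> i" and "i \<le> n"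
    and "\<not> p dvd (n choose i) \<or> \<not> p dvd ((n - 1) choose (i - 1))"
    and "CHAR('a::field) = p"
    and "(a::'a) \<noteq> 0"
    and "m = order a (qsym q n i :: 'a poly)"
    and "m > 1"
  shows "\<not> (coprime m p \<and> coprime (m - 1) p)"
proof
  assume coprime: "coprime m p \<and> coprime (m - 1) p"
  let ?f = "qsym q n i :: 'a poly"
  have "\<not> is_unit p"
    using assms(1) not_prime_unit by blast
  then have "\<not> p dvd m" "\<not> p dvd (m - 1)"
    using coprime coprime_absorb_right by blast+
  then have not_dvd: "\<not> CHAR('a) dvd order a ?f" "\<not> CHAR('a) dvd (order a ?f - 1)"
    using assms(8,10) by simp_all
  have "p \<le> q"
    using assms(2,3) prime_gt_0_nat[OF assms(1)] by (simp add: self_le_power)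
  then have "q \<ge> 2"
    using prime_ge_2_nat[OF assms(1)] by linarith
  then have f_nonzero: "?f \<noteq> 0"
    using assms(6) by (rule qsym_nonzero)
  have f'_nonzero: "pderiv ?f \<noteq> 0"
    using f_nonzero not_dvd(1) by (rule pderiv_nonzero_if_not_char_dvd_order)
  have "order a (pderiv ?f) = order a ?f - 1"
    using f_nonzero not_dvd(1) by (rule order_pderiv_if_not_char_dvd_order)
  with not_dvd(2) have "\<not> CHAR('a) dvd order a (pderiv ?f)"
    by simp
  with f'_nonzero have "pderiv (pderiv ?f) \<noteq> 0"
    by (rule pderiv_nonzero_if_not_char_dvd_order)
  moreover have "CHAR('a) dvd q"
    using assms(2,3,8) by (simp add: dvd_power)
  ultimately show False
    using pderiv_pderiv_qsym by blast
qed

end
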